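(* Let $d\ge2$. There exist positive constants $c^-=c^-(d)$ and $c^+=c^+(d)$ such that, for $\mathbf p=(p_1,\dots,p_d)$: (i) with high probability $\mathcal G(n,\mathbf p)$ is not topologically connected if $p_k\le\frac{c^-\log n}{n^k}$ for all $k\in[d]$; (ii) with high probability $\mathcal G(n,\mathbf p)$ is topologically connected if $p_k\ge\frac{c^+\log n}{n^k}$ for some $k\in[d]$.
   Context: $\mathcal G(n,\mathbf p)$: random simplicial complex on $[n]$ where for each $k\in[d]$ each $(k+1)$-subset of $[n]$ independently is an edge with probability $p_k\in[0,1]$; the complex consists of all singletons and all nonempty subsets of edges. Topologically connected means connected as a topological space (equivalently, the underlying hypergraph is vertex-connected). Whp = with probability tending to $1$ as $n\to\infty$. *)

theory Defs
  imports Complex_Main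
begin

definition kedges :: "nat \<Rightarrow> nat \<Rightarrow> nat set set" where
  "kedges n k = {e. e \<subseteq> {..<n} \<and> card e = k + 1}"

definition all_edges :: "nat \<Rightarrow> nat \<Rightarrow> nat set set" where
  "all_edges n d = (\<Union>k\<in>{1..d}. kedges n k)"

text \<open>Probability that the edge set of G(n,p) equals E (E a subset of all_edges n d):
  each (k+1)-set is independently an edge with probability p k.\<close>
definition edge_weight :: "nat \<Rightarrow> nat \<Rightarrow> (nat \<Rightarrow> real) \<Rightarrow> nat set set \<Rightarrow> real" where
  "edge_weight n d p E =
     (\<Prod>e\<in>all_edges n d. if e \<in> E then p (card e - 1) else 1 - p (card e - 1))"

text \<open>Two vertices are adjacent if they lie in a common edge; the complex (all singletons
  and all nonempty subsets of edges) is topologically connected iff the hypergraph on [n]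
  is vertex-connected.\<close>
definition hadj :: "nat set set \<Rightarrow> (nat \<times> nat) set" where
  "hadj E = {(u, v). \<exists>e\<in>E. u \<in> e \<and> v \<in> e}"

definition hconnected :: "nat \<Rightarrow> nat set set \<Rightarrow> bool" where
  "hconnected n E \<longleftrightarrow> (\<forall>u<n. \<forall>v<n. (u, v) \<in> (hadj E)\<^sup>*)"

definition prob_connected :: "nat \<Rightarrow> nat \<Rightarrow> (nat \<Rightarrow> real) \<Rightarrow> real" where
  "prob_connected n d p =
     (\<Sum>E\<in>Pow (all_edges n d). if hconnected n E then edge_weight n d p E else 0)"

end

theory Submission
  imports Defs "HOL-Analysis.Infinite_Products" "HOL-Real_Asymp.Real_Asymp"
begin

(*
  Below the threshold, let X count the isolated vertices.  A vertex lies in at most n^k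
  potential k-edges, each present with probability at most c^- log n / n^k, so it is
  isolated with probability at least n^(-1/2) and E X >= sqrt n.  Two distinct vertices
  share at most n^(k-1) potential k-edges, so their isolation events are nearly
  independent and E X^2 <= E X + (1 + O(log n / n)) (E X)^2.  The second moment method
  gives P(X = 0) = O(1/sqrt n + log n / n), and a connected complex has no isolated vertex.

  Above the threshold in dimension k, a disconnected complex has a vertex set S with
  0 < |S| <= n/2 that no edge crosses.  At least |S| C(n - |S|, k) potential k-edges cross S,
  so S is uncrossed with probability at most n^(-2|S|), and the union bound over all such S
  gives P(disconnected) <= (1 + n^(-2))^n - 1 = O(1/n).
*)

section \<open>Expectations over the edge distribution\<close>

lemma finite_kedges: "finite (kedges n k)"
  unfolding kedges_def by (rule finite_subset[of _ "Pow {..<n}"]) auto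

lemma finite_kedge: "e \<in> kedges n k \<Longrightarrow> finite e"
  unfolding kedges_def using finite_subset by blast

lemma finite_all_edges: "finite (all_edges n d)"
  unfolding all_edges_def using finite_kedges by auto

definition edge_prob :: "(nat \<Rightarrow> real) \<Rightarrow> nat set \<Rightarrow> real" where
  "edge_prob p e = p (card e - 1)"

lemma edge_prob_kedges: "e \<in> kedges n k \<Longrightarrow> edge_prob p e = p k"
  by (simp add: edge_prob_def kedges_def)

definition expect :: "nat \<Rightarrow> nat \<Rightarrow> (nat \<Rightarrow> real) \<Rightarrow> (nat set set \<Rightarrow> real) \<Rightarrow> real" where
  "expect n d p X = (\<Sum>E\<in>Pow (all_edges n d). edge_weight n d p E * X E)"

lemma edge_weight_split:
  assumes "E \<subseteq> all_edges n d"
  shows "edge_weight n d p E =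
    (\<Prod>e\<in>E. edge_prob p e) * (\<Prod>e\<in>all_edges n d - E. 1 - edge_prob p e)"
proof -
  have "all_edges n d \<inter> E = E" using assms by auto
  then show ?thesis
    unfolding edge_weight_def edge_prob_def
    by (simp add: prod.If_cases[OF finite_all_edges] Diff_eq)
qed

lemma expect_avoid:
  assumes "B \<subseteq> all_edges n d"
  shows "expect n d p (\<lambda>E. if E \<inter> B = {} then 1 else 0) = (\<Prod>e\<in>B. 1 - edge_prob p e)"
proof -
  let ?A = "all_edges n d"
  define f where "f e = (if e \<in> B then 0 else edge_prob p e)" for e
  have "(\<Prod>e\<in>B. 1 - edge_prob p e) = (\<Prod>e\<in>?A \<inter> B. 1 - edge_prob p e)"
    using assms by (simp add: Int_absorb1)
  also have "\<dots> = (\<Prod>e\<in>?A. f e + (1 - edge_prob p e))"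
    by (auto simp: prod.inter_restrict[OF finite_all_edges] f_def intro!: prod.cong)
  also have "\<dots> = (\<Sum>E\<in>Pow ?A. (\<Prod>e\<in>E. f e) * (\<Prod>e\<in>?A - E. 1 - edge_prob p e))"
    by (rule prod_add[OF finite_all_edges])
  also have "\<dots> = expect n d p (\<lambda>E. if E \<inter> B = {} then 1 else 0)"
    unfolding expect_def
  proof (intro sum.cong refl)
    fix E assume E: "E \<in> Pow ?A"
    then have "finite E" using finite_all_edges finite_subset by blast
    then have "(\<Prod>e\<in>E. f e) = (if E \<inter> B = {} then \<Prod>e\<in>E. edge_prob p e else 0)"
      by (auto simp: f_def intro!: prod.cong)
    with E show "(\<Prod>e\<in>E. f e) * (\<Prod>e\<in>?A - E. 1 - edge_prob p e) =
        edge_weight n d p E * (if E \<inter> B = {} then 1 else 0)"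
      by (simp add: edge_weight_split)
  qed
  finally show ?thesis ..
qed

lemma expect_cmult: "expect n d p (\<lambda>E. c * X E) = c * expect n d p X"
  by (simp add: expect_def sum_distrib_left mult.left_commute)

lemma expect_const: "expect n d p (\<lambda>_. c) = c"
proof -
  have "expect n d p (\<lambda>_. 1) = 1"
    using expect_avoid[of "{}" n d p] by simp
  then show ?thesis
    using expect_cmult[of n d p c "\<lambda>_. 1"] by simp
qed

lemma expect_add: "expect n d p (\<lambda>E. X E + Y E) = expect n d p X + expect n d p Y"
  by (simp add: expect_def distrib_left sum.distrib)

lemma expect_sum: "expect n d p (\<lambda>E. \<Sum>i\<in>I. X i E) = (\<Sum>i\<in>I. expect n d p (X i))"
  by (simp add: expect_def sum_distrib_left sum.swap[of _ I])

lemma edge_weight_nonneg: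
  assumes "\<forall>k. 0 \<le> p k \<and> p k \<le> 1"
  shows "0 \<le> edge_weight n d p E"
  unfolding edge_weight_def using assms by (auto intro!: prod_nonneg)

lemma expect_mono:
  assumes "\<forall>k. 0 \<le> p k \<and> p k \<le> 1" and "\<And>E. E \<subseteq> all_edges n d \<Longrightarrow> X E \<le> Y E"
  shows "expect n d p X \<le> expect n d p Y"
  unfolding expect_def using assms edge_weight_nonneg[OF assms(1)]
  by (intro sum_mono mult_left_mono) auto

lemma prob_connected_eq_expect:
  "prob_connected n d p = expect n d p (\<lambda>E. if hconnected n E then 1 else 0)"
  unfolding prob_connected_def expect_def by (intro sum.cong) auto

lemma prob_disconnected_eq_expect:
  "1 - prob_connected n d p = expect n d p (\<lambda>E. if hconnected n E then 0 else 1)"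
proof -
  have "expect n d p (\<lambda>E. if hconnected n E then 0 else 1) =
      expect n d p (\<lambda>E. 1 + (- 1) * (if hconnected n E then 1 else 0))"
    by (rule arg_cong[where f = "expect n d p"]) auto
  also have "\<dots> = 1 - prob_connected n d p"
    by (simp only: expect_add expect_cmult expect_const prob_connected_eq_expect)
  finally show ?thesis ..
qed

lemma prob_connected_bounds:
  assumes "\<forall>k. 0 \<le> p k \<and> p k \<le> 1"
  shows "0 \<le> prob_connected n d p" "prob_connected n d p \<le> 1"
  using expect_mono[OF assms, where X = "\<lambda>_. 0" and Y = "\<lambda>E. if hconnected n E then 1 else 0"]
    expect_mono[OF assms, where X = "\<lambda>E. if hconnected n E then 1 else 0" and Y = "\<lambda>_. 1"]
  by (simp_all add: prob_connected_eq_expect expect_const)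

lemma expect_zero_le_second_moment:
  assumes "\<forall>k. 0 \<le> p k \<and> p k \<le> 1" and "expect n d p X = \<mu>" "0 < \<mu>"
  shows "expect n d p (\<lambda>E. if X E = 0 then 1 else 0) \<le> expect n d p (\<lambda>E. (X E)\<^sup>2) / \<mu>\<^sup>2 - 1"
proof -
  have "expect n d p (\<lambda>E. if X E = 0 then 1 else 0) \<le> expect n d p (\<lambda>E. (X E - \<mu>)\<^sup>2 / \<mu>\<^sup>2)"
    using assms(3) by (intro expect_mono[OF assms(1)]) auto
  also have "(\<lambda>E. (X E - \<mu>)\<^sup>2 / \<mu>\<^sup>2) = (\<lambda>E. 1 / \<mu>\<^sup>2 * (X E)\<^sup>2 + (- 2 / \<mu>) * X E + 1)"
    using assms(3) by (auto simp: power2_eq_square field_simps)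
  also have "expect n d p \<dots> = expect n d p (\<lambda>E. (X E)\<^sup>2) / \<mu>\<^sup>2 - 1"
    using assms(2,3) by (simp only: expect_add expect_cmult expect_const) (simp add: power2_eq_square)
  finally show ?thesis .
qed

lemma hconnected_imp_covered:
  assumes "hconnected n E" "2 \<le> n" "v < n"
  shows "\<exists>e\<in>E. v \<in> e"
proof -
  define u where "u = (if v = 0 then 1 else 0 :: nat)"
  have u: "u < n" "u \<noteq> v" using assms(2) unfolding u_def by auto
  then have "(v, u) \<in> (hadj E)\<^sup>*" using assms unfolding hconnected_def by auto
  then obtain w where "(v, w) \<in> hadj E" using u(2) by (cases rule: converse_rtranclE) auto
  then show ?thesis unfolding hadj_def by auto
qed

lemma not_hconnected_imp_cut:
  assumes "E \<subseteq> all_edges n d" "\<not> hconnected n E"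
  obtains S where "S \<subseteq> {..<n}" "S \<noteq> {}" "2 * card S \<le> n" "\<forall>e\<in>E. e \<subseteq> S \<or> e \<inter> S = {}"
proof -
  from assms(2) obtain u v where uv: "u < n" "v < n" "(u, v) \<notin> (hadj E)\<^sup>*"
    unfolding hconnected_def by auto
  define C where "C = {w. w < n \<and> (u, w) \<in> (hadj E)\<^sup>*}"
  define D where "D = {..<n} - C"
  have edges_below_n: "e \<subseteq> {..<n}" if "e \<in> E" for e
    using assms(1) that unfolding all_edges_def kedges_def by auto
  have "y \<in> C" if "e \<in> E" "x \<in> e" "y \<in> e" "x \<in> C" for e x y
  proof -
    have "(x, y) \<in> hadj E" unfolding hadj_def using that by auto
    with that edges_below_n show ?thesis unfolding C_def by (auto intro: rtrancl_into_rtrancl)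
  qed
  then have C_cut: "\<forall>e\<in>E. e \<subseteq> C \<or> e \<inter> C = {}" by blast
  then have D_cut: "\<forall>e\<in>E. e \<subseteq> D \<or> e \<inter> D = {}"
    using edges_below_n unfolding D_def by blast
  have C: "C \<subseteq> {..<n}" "C \<noteq> {}" and D: "D \<subseteq> {..<n}" "D \<noteq> {}"
    using uv unfolding C_def D_def by auto
  have "card C + card D = n"
    using C(1) card_mono[OF finite_lessThan C(1)] unfolding D_def
    by (simp add: card_Diff_subset finite_subset)
  then have "2 * card C \<le> n \<or> 2 * card D \<le> n" by linarith
  with C D C_cut D_cut that show ?thesis by blast
qed

section \<open>Counting edges through a vertex set\<close>

definition edges_containing :: "nat \<Rightarrow> nat \<Rightarrow> nat set \<Rightarrow> nat set set" where
  "edges_containing n d T = {e \<in> all_edges n d. T \<subseteq> e}"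

lemma edges_containing_subset: "edges_containing n d T \<subseteq> all_edges n d"
  by (auto simp: edges_containing_def)

lemma edges_containing_Int:
  "edges_containing n d S \<inter> edges_containing n d T = edges_containing n d (S \<union> T)"
  by (auto simp: edges_containing_def)

lemma finite_edges_containing: "finite (edges_containing n d T)"
  using finite_subset[OF edges_containing_subset finite_all_edges] .

text \<open>Multiplied out, instead of a bound by \<open>n ^ (k + 1 - card T)\<close> whose truncated
  exponent misbehaves when \<open>card T > k + 1\<close>.\<close>

lemma card_kedges_containing:
  assumes "finite T" "T \<noteq> {}"
  shows "card {e \<in> kedges n k. T \<subseteq> e} * n ^ (card T - 1) \<le> n ^ k"
proof (cases "card T \<le> k + 1")
  case True
  let ?U = "{U. U \<subseteq> {..<n} \<and> card U = k + 1 - card T}"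
  have finite_U: "finite ?U" by (rule finite_subset[of _ "Pow {..<n}"]) auto
  have "{e \<in> kedges n k. T \<subseteq> e} \<subseteq> (\<union>) T ` ?U"
  proof
    fix e assume e: "e \<in> {e \<in> kedges n k. T \<subseteq> e}"
    then have "e - T \<in> ?U"
      using finite_kedge[of e] unfolding kedges_def by (auto simp: card_Diff_subset assms(1))
    moreover have "e = T \<union> (e - T)" using e by auto
    ultimately show "e \<in> (\<union>) T ` ?U" by blast
  qed
  then have "card {e \<in> kedges n k. T \<subseteq> e} \<le> card ((\<union>) T ` ?U)"
    by (intro card_mono finite_imageI finite_U)
  also have "\<dots> \<le> card ?U" by (rule card_image_le[OF finite_U])
  also have "\<dots> = n choose (k + 1 - card T)"
    using n_subsets[of "{..<n}"] by simp
  also have "\<dots> \<le> n ^ (k + 1 - card T)"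
    by (cases "k + 1 - card T \<le> n") (simp_all add: binomial_le_pow binomial_eq_0)
  finally have "card {e \<in> kedges n k. T \<subseteq> e} * n ^ (card T - 1) \<le> n ^ (k + 1 - card T) * n ^ (card T - 1)"
    by simp
  also have "k + 1 - card T + (card T - 1) = k"
    using True assms card_gt_0_iff[of T] by linarith
  then have "n ^ (k + 1 - card T) * n ^ (card T - 1) = n ^ k"
    by (simp flip: power_add)
  finally show ?thesis .
next
  case False
  have "\<not> T \<subseteq> e" if "e \<in> kedges n k" for e
    using False card_mono[OF finite_kedge[OF that]] that unfolding kedges_def by auto
  then have "{e \<in> kedges n k. T \<subseteq> e} = {}" by blast
  then show ?thesis by (simp only: card.empty mult_0 zero_le)
qed

lemma sum_edge_prob_by_dim:
  assumes "F \<subseteq> all_edges n d"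
  shows "(\<Sum>e\<in>F. edge_prob p e) = (\<Sum>k\<in>{1..d}. real (card (F \<inter> kedges n k)) * p k)"
proof -
  have F: "F = (\<Union>k\<in>{1..d}. F \<inter> kedges n k)" using assms unfolding all_edges_def by auto
  have "(\<Sum>e\<in>F. edge_prob p e) = (\<Sum>k\<in>{1..d}. \<Sum>e\<in>F \<inter> kedges n k. edge_prob p e)"
    by (subst F, rule sum.UNION_disjoint) (auto simp: finite_kedges kedges_def)
  also have "\<dots> = (\<Sum>k\<in>{1..d}. \<Sum>e\<in>F \<inter> kedges n k. p k)"
    by (intro sum.cong refl) (auto simp: edge_prob_kedges)
  also have "\<dots> = (\<Sum>k\<in>{1..d}. real (card (F \<inter> kedges n k)) * p k)"
    by simp
  finally show ?thesis .
qed

lemma sum_edge_prob_containing_le: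
  assumes "\<forall>k. 0 \<le> p k" "finite T" "T \<noteq> {}" "\<forall>k\<in>{1..d}. p k * real n ^ k \<le> b"
  shows "(\<Sum>e\<in>edges_containing n d T. edge_prob p e) * real n ^ (card T - 1) \<le> real d * b"
proof -
  have kedges_part: "edges_containing n d T \<inter> kedges n k = {e \<in> kedges n k. T \<subseteq> e}"
    if "k \<in> {1..d}" for k
    using that by (auto simp: edges_containing_def all_edges_def)
  have "(\<Sum>e\<in>edges_containing n d T. edge_prob p e) * real n ^ (card T - 1) =
      (\<Sum>k\<in>{1..d}. real (card (edges_containing n d T \<inter> kedges n k)) * p k) * real n ^ (card T - 1)"
    by (simp add: sum_edge_prob_by_dim[OF edges_containing_subset])
  also have "\<dots> = (\<Sum>k\<in>{1..d}. real (card {e \<in> kedges n k. T \<subseteq> e} * n ^ (card T - 1)) * p k)"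
    unfolding sum_distrib_right by (intro sum.cong refl) (simp add: kedges_part)
  also have "\<dots> \<le> (\<Sum>k\<in>{1..d}. real (n ^ k) * p k)"
    using card_kedges_containing[OF assms(2,3)] assms(1)
    by (intro sum_mono mult_right_mono) (simp_all only: of_nat_le_iff)
  also have "\<dots> \<le> (\<Sum>k\<in>{1..d}. b)"
    using assms(4) by (intro sum_mono) (simp add: mult.commute)
  finally show ?thesis by simp
qed

section \<open>Isolated vertices below the threshold\<close>

lemma exp_le_prod_one_minus:
  fixes f :: "'a \<Rightarrow> real"
  assumes "finite A" "\<And>x. x \<in> A \<Longrightarrow> 0 \<le> f x \<and> f x \<le> 1/2"
  shows "exp (- 2 * sum f A) \<le> (\<Prod>x\<in>A. 1 - f x)"
proof -
  have "exp (- 2 * a) \<le> 1 - a" if "0 \<le> a" "a \<le> 1/2" for a :: real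
  proof -
    have "2 * a\<^sup>2 \<le> a"
      using mult_left_mono[of "2 * a" 1 a] that by (simp add: power2_eq_square algebra_simps)
    then have "- 2 * a \<le> ln (1 - a)" using ln_one_minus_pos_lower_bound[OF that] by linarith
    then show ?thesis using that by (simp add: ln_ge_iff)
  qed
  then have "(\<Prod>x\<in>A. exp (- 2 * f x)) \<le> (\<Prod>x\<in>A. 1 - f x)"
    using assms(2) by (intro prod_mono) auto
  then show ?thesis
    using assms(1) by (simp add: exp_sum[symmetric] sum_distrib_left)
qed

lemma prod_one_minus_union_le:
  fixes f :: "'a \<Rightarrow> real"
  assumes "finite A" "finite B" "\<And>x. x \<in> A \<union> B \<Longrightarrow> f x \<in> {0..1}"
  shows "(\<Prod>x\<in>A \<union> B. 1 - f x) * (1 - sum f (A \<inter> B)) \<le> (\<Prod>x\<in>A. 1 - f x) * (\<Prod>x\<in>B. 1 - f x)"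
proof -
  have "(\<Prod>x\<in>A \<union> B. 1 - f x) * (1 - sum f (A \<inter> B)) \<le> (\<Prod>x\<in>A \<union> B. 1 - f x) * (\<Prod>x\<in>A \<inter> B. 1 - f x)"
    using assms(3) by (intro mult_left_mono Weierstrass_prod_ineq prod_nonneg) auto
  also have "\<dots> = (\<Prod>x\<in>A. 1 - f x) * (\<Prod>x\<in>B. 1 - f x)"
    by (rule prod.union_inter[OF assms(1,2)])
  finally show ?thesis .
qed

lemma ln_over_four_mult_le:
  fixes x :: real
  assumes "0 < x"
  shows "ln x / (4 * x) \<le> 1/4"
  using ln_bound[OF assms] assms by (simp add: field_simps)

definition isolated_count :: "nat \<Rightarrow> nat \<Rightarrow> nat set set \<Rightarrow> real" where
  "isolated_count n d E = (\<Sum>v<n. if E \<inter> edges_containing n d {v} = {} then 1 else 0)"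

lemma hconnected_imp_isolated_count_eq_0:
  assumes "hconnected n E" "E \<subseteq> all_edges n d" "2 \<le> n"
  shows "isolated_count n d E = 0"
  unfolding isolated_count_def
proof (intro sum.neutral ballI)
  fix v assume "v \<in> {..<n}"
  then obtain e where "e \<in> E" "v \<in> e" using hconnected_imp_covered[OF assms(1,3)] by auto
  with assms(2) show "(if E \<inter> edges_containing n d {v} = {} then 1 else 0) = (0 :: real)"
    unfolding edges_containing_def by auto
qed

definition isolation_prob :: "nat \<Rightarrow> nat \<Rightarrow> (nat \<Rightarrow> real) \<Rightarrow> nat \<Rightarrow> real" where
  "isolation_prob n d p v = (\<Prod>e\<in>edges_containing n d {v}. 1 - edge_prob p e)"

lemma expect_isolated_count:
  "expect n d p (isolated_count n d) = (\<Sum>v<n. isolation_prob n d p v)"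
  unfolding isolated_count_def isolation_prob_def expect_sum
  by (simp add: expect_avoid edges_containing_subset)

lemma expect_isolated_count_sq:
  "expect n d p (\<lambda>E. (isolated_count n d E)\<^sup>2) =
    (\<Sum>u<n. \<Sum>v<n. \<Prod>e\<in>edges_containing n d {u} \<union> edges_containing n d {v}. 1 - edge_prob p e)"
proof -
  have "(isolated_count n d E)\<^sup>2 = (\<Sum>u<n. \<Sum>v<n.
      if E \<inter> (edges_containing n d {u} \<union> edges_containing n d {v}) = {} then 1 else 0)" for E
    unfolding isolated_count_def power2_eq_square sum_product by (intro sum.cong refl) auto
  then show ?thesis
    by (simp add: expect_sum expect_avoid edges_containing_subset)
qed

context
  fixes n d :: nat and p :: "nat \<Rightarrow> real"
  assumes p01: "\<forall>k. 0 \<le> p k \<and> p k \<le> 1" and d_pos: "1 \<le> d" and n_ge2: "2 \<le> n"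
    and sparse: "\<forall>k\<in>{1..d}. p k \<le> 1 / (4 * real d) * ln (real n) / real n ^ k"
begin

lemma sparse_mult_pow_le: "\<forall>k\<in>{1..d}. p k * real n ^ k \<le> ln (real n) / (4 * real d)"
  using sparse n_ge2 by (simp add: field_simps)

lemma sparse_edge_prob_le: "e \<in> all_edges n d \<Longrightarrow> edge_prob p e \<le> 1/4"
proof -
  assume "e \<in> all_edges n d"
  then obtain k where k: "k \<in> {1..d}" "e \<in> kedges n k" unfolding all_edges_def by auto
  have "p k * real n \<le> p k * real n ^ k"
    using k p01 n_ge2 by (intro mult_left_mono) (auto simp: self_le_power)
  also have "\<dots> \<le> ln (real n) / (4 * real d)" using sparse_mult_pow_le k(1) by blast
  also have "\<dots> \<le> ln (real n) / 4"
    using d_pos n_ge2 by (intro divide_left_mono) auto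
  also have "\<dots> \<le> real n / 4"
    using ln_bound[of "real n"] n_ge2 by simp
  finally show ?thesis using n_ge2 k(2) by (simp add: edge_prob_kedges field_simps)
qed

lemma sparse_star_sum_le: "(\<Sum>e\<in>edges_containing n d {v}. edge_prob p e) \<le> ln (real n) / 4"
  using sum_edge_prob_containing_le[of p "{v}" d n "ln (real n) / (4 * real d)"] p01 sparse_mult_pow_le d_pos
  by simp

lemma sparse_pair_sum_le:
  "u \<noteq> v \<Longrightarrow> (\<Sum>e\<in>edges_containing n d {u, v}. edge_prob p e) \<le> ln (real n) / (4 * real n)"
  using sum_edge_prob_containing_le[of p "{u, v}" d n "ln (real n) / (4 * real d)"] p01 sparse_mult_pow_le d_pos n_ge2
  by (simp add: field_simps)

lemma sparse_isolation_prob_ge: "1 / sqrt (real n) \<le> isolation_prob n d p v"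
proof -
  have "1 / sqrt (real n) = exp (- 2 * (ln (real n) / 4))"
    using n_ge2 by (simp add: powr_half_sqrt[symmetric] powr_def exp_minus inverse_eq_divide)
  also have "\<dots> \<le> exp (- 2 * (\<Sum>e\<in>edges_containing n d {v}. edge_prob p e))"
    using sparse_star_sum_le[of v] by simp
  also have "\<dots> \<le> (\<Prod>e\<in>edges_containing n d {v}. 1 - edge_prob p e)"
  proof (intro exp_le_prod_one_minus finite_edges_containing)
    fix e assume "e \<in> edges_containing n d {v}"
    then have "edge_prob p e \<le> 1/4" using sparse_edge_prob_le edges_containing_subset by blast
    then show "0 \<le> edge_prob p e \<and> edge_prob p e \<le> 1/2" using p01 by (simp add: edge_prob_def)
  qed
  finally show ?thesis unfolding isolation_prob_def .
qed

lemma sparse_pair_isolation_prob_le: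
  "(\<Prod>e\<in>edges_containing n d {u} \<union> edges_containing n d {v}. 1 - edge_prob p e) \<le>
    (if u = v then isolation_prob n d p u else 0) +
    isolation_prob n d p u * isolation_prob n d p v / (1 - ln (real n) / (4 * real n))"
proof (cases "u = v")
  case True
  have "0 \<le> isolation_prob n d p u"
    using order_trans[OF _ sparse_isolation_prob_ge[of u]] by simp
  with True ln_over_four_mult_le[of "real n"] n_ge2 show ?thesis by (simp add: isolation_prob_def)
next
  case False
  let ?P = "\<Prod>e\<in>edges_containing n d {u} \<union> edges_containing n d {v}. 1 - edge_prob p e"
  have pair_sum: "(\<Sum>e\<in>edges_containing n d {u} \<inter> edges_containing n d {v}. edge_prob p e)
      \<le> ln (real n) / (4 * real n)"
    using sparse_pair_sum_le[OF False] by (simp add: edges_containing_Int insert_commute)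
  have edge_prob_01: "edge_prob p e \<in> {0..1}" for e
    using p01 by (simp add: edge_prob_def)
  have "0 \<le> ?P"
    using edge_prob_01 by (intro prod_nonneg) (simp add: algebra_simps)
  then have "?P * (1 - ln (real n) / (4 * real n)) \<le>
      ?P * (1 - (\<Sum>e\<in>edges_containing n d {u} \<inter> edges_containing n d {v}. edge_prob p e))"
    using pair_sum by (intro mult_left_mono) auto
  also have "\<dots> \<le> isolation_prob n d p u * isolation_prob n d p v"
    unfolding isolation_prob_def using edge_prob_01
    by (intro prod_one_minus_union_le finite_edges_containing)
  finally have "?P * (1 - ln (real n) / (4 * real n)) \<le> isolation_prob n d p u * isolation_prob n d p v" .
  with False ln_over_four_mult_le[of "real n"] n_ge2 show ?thesis by (simp add: field_simps)
qed

lemma sparse_expect_isolated_count_ge: "sqrt (real n) \<le> expect n d p (isolated_count n d)"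
proof -
  have "sqrt (real n) = (\<Sum>v<n. 1 / sqrt (real n))"
    using n_ge2 by (simp add: real_div_sqrt)
  also have "\<dots> \<le> expect n d p (isolated_count n d)"
    unfolding expect_isolated_count by (intro sum_mono sparse_isolation_prob_ge)
  finally show ?thesis .
qed

lemma sparse_second_moment_le:
  defines "\<mu> \<equiv> expect n d p (isolated_count n d)" and "\<delta> \<equiv> ln (real n) / (4 * real n)"
  shows "expect n d p (\<lambda>E. (isolated_count n d E)\<^sup>2) \<le> \<mu> + \<mu>\<^sup>2 / (1 - \<delta>)"
proof -
  have "expect n d p (\<lambda>E. (isolated_count n d E)\<^sup>2) \<le> (\<Sum>u<n. \<Sum>v<n.
      (if u = v then isolation_prob n d p u else 0) + isolation_prob n d p u * isolation_prob n d p v / (1 - \<delta>))"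
    unfolding expect_isolated_count_sq \<delta>_def by (intro sum_mono sparse_pair_isolation_prob_le)
  also have "\<dots> = \<mu> + \<mu>\<^sup>2 / (1 - \<delta>)"
    unfolding \<mu>_def expect_isolated_count
    by (simp add: sum.distrib power2_eq_square sum_product sum_divide_distrib)
  finally show ?thesis .
qed

lemma sparse_prob_connected_le:
  "prob_connected n d p \<le> 1 / sqrt (real n) + ln (real n) / (2 * real n)"
proof -
  define \<mu> where "\<mu> = expect n d p (isolated_count n d)"
  define \<delta> where "\<delta> = ln (real n) / (4 * real n)"
  have \<mu>: "sqrt (real n) \<le> \<mu>" "0 < \<mu>"
    using sparse_expect_isolated_count_ge n_ge2 unfolding \<mu>_def
    by (auto intro: less_le_trans[of 0 "sqrt (real n)"])
  have \<delta>: "0 \<le> \<delta>" "\<delta> \<le> 1/4"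
    using ln_over_four_mult_le[of "real n"] n_ge2 unfolding \<delta>_def by auto
  have "prob_connected n d p \<le> expect n d p (\<lambda>E. if isolated_count n d E = 0 then 1 else 0)"
    unfolding prob_connected_eq_expect
  proof (rule expect_mono[OF p01])
    fix E assume "E \<subseteq> all_edges n d"
    then show "(if hconnected n E then 1 else 0) \<le> (if isolated_count n d E = 0 then 1 else 0 :: real)"
      using hconnected_imp_isolated_count_eq_0[of n E d] n_ge2 by auto
  qed
  also have "\<dots> \<le> expect n d p (\<lambda>E. (isolated_count n d E)\<^sup>2) / \<mu>\<^sup>2 - 1"
    using \<mu> by (intro expect_zero_le_second_moment[OF p01]) (simp_all add: \<mu>_def)
  also have "\<dots> \<le> (\<mu> + \<mu>\<^sup>2 / (1 - \<delta>)) / \<mu>\<^sup>2 - 1"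
    using sparse_second_moment_le unfolding \<mu>_def \<delta>_def
    by (intro diff_right_mono divide_right_mono) auto
  also have "\<dots> = 1 / \<mu> + \<delta> / (1 - \<delta>)"
    using \<mu> \<delta> by (simp add: field_simps power2_eq_square)
  also have "\<dots> \<le> 1 / sqrt (real n) + 2 * \<delta>"
  proof (rule add_mono)
    show "1 / \<mu> \<le> 1 / sqrt (real n)" using \<mu> n_ge2 by (intro divide_left_mono) auto
    have "\<delta> * (2 * \<delta>) \<le> \<delta> * 1" using \<delta> by (intro mult_left_mono) auto
    then show "\<delta> / (1 - \<delta>) \<le> 2 * \<delta>" using \<delta> by (simp add: field_simps)
  qed
  also have "\<dots> = 1 / sqrt (real n) + ln (real n) / (2 * real n)" unfolding \<delta>_def by simp
  finally show ?thesis .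
qed

end

section \<open>Uncrossed cuts above the threshold\<close>

definition crossing_kedges :: "nat \<Rightarrow> nat \<Rightarrow> nat set \<Rightarrow> nat set set" where
  "crossing_kedges n k S = {e \<in> kedges n k. e \<inter> S \<noteq> {} \<and> \<not> e \<subseteq> S}"

lemma card_crossing_kedges_ge:
  assumes "S \<subseteq> {..<n}" "1 \<le> k"
  shows "card S * ((n - card S) choose k) \<le> card (crossing_kedges n k S)"
proof -
  let ?T = "{T. T \<subseteq> {..<n} - S \<and> card T = k}"
  let ?f = "\<lambda>(v, T). insert v T"
  have "finite S" using assms(1) finite_subset by blast
  then have card_T: "card ?T = (n - card S) choose k"
    using n_subsets[of "{..<n} - S" k] assms(1) by (simp add: card_Diff_subset)
  have "inj_on ?f (S \<times> ?T)"
  proof (rule inj_onI, clarsimp)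
    fix v T v' T'
    assume a: "v \<in> S" "T \<subseteq> {..<n} - S" "v' \<in> S" "T' \<subseteq> {..<n} - S" "insert v T = insert v' T'"
    have "v = v'" using a by blast
    moreover have "T = insert v T - S" "T' = insert v' T' - S" using a by auto
    ultimately show "v = v' \<and> T = T'" using a(5) by metis
  qed
  moreover have "?f ` (S \<times> ?T) \<subseteq> crossing_kedges n k S"
  proof
    fix x assume "x \<in> ?f ` (S \<times> ?T)"
    then obtain v T where a: "v \<in> S" "T \<subseteq> {..<n} - S" "card T = k" and x: "x = insert v T"
      by auto
    then have "finite T" "v \<notin> T" "T \<noteq> {}"
      using assms(2) finite_subset[of T "{..<n}"] by auto
    with a assms(1) show "x \<in> crossing_kedges n k S"
      unfolding x crossing_kedges_def kedges_def by auto
  qed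
  then have "card (?f ` (S \<times> ?T)) \<le> card (crossing_kedges n k S)"
    by (intro card_mono) (auto simp: crossing_kedges_def finite_kedges)
  ultimately show ?thesis
    using card_T by (simp add: card_image card_cartesian_product)
qed

lemma binomial_ge_pow_div:
  assumes "1 \<le> k" "k \<le> d" "2 * s \<le> n" "2 * d \<le> n"
  shows "real n ^ k / (2 * real d) ^ d \<le> real ((n - s) choose k)"
proof -
  have "real n ^ k / (2 * real d) ^ d \<le> real n ^ k / (2 * real k) ^ k"
  proof (rule divide_left_mono)
    have "(2 * real k) ^ k \<le> (2 * real d) ^ k" using assms by (intro power_mono) auto
    also have "\<dots> \<le> (2 * real d) ^ d" using assms by (intro power_increasing) auto
    finally show "(2 * real k) ^ k \<le> (2 * real d) ^ d" .
  qed (use assms in auto)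
  also have "\<dots> = (real n / (2 * real k)) ^ k" by (simp add: power_divide)
  also have "\<dots> \<le> (real (n - s) / real k) ^ k"
    using assms by (intro power_mono) (auto simp: divide_simps of_nat_diff)
  also have "\<dots> \<le> real ((n - s) choose k)"
    using assms by (intro binomial_ge_n_over_k_pow_k) auto
  finally show ?thesis .
qed

lemma dense_cut_avoid_prob_le:
  assumes p01: "\<forall>k. 0 \<le> p k \<and> p k \<le> 1" and k: "k \<in> {1..d}" and n: "2 \<le> n" "2 * d \<le> n"
    and dense: "2 * (2 * real d) ^ d * ln (real n) / real n ^ k \<le> p k"
    and S: "S \<subseteq> {..<n}" "2 * card S \<le> n"
  shows "(\<Prod>e\<in>crossing_kedges n k S. 1 - edge_prob p e) \<le> (1 / real n ^ 2) ^ card S"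
proof -
  let ?s = "card S" and ?c = "card (crossing_kedges n k S)"
  have "2 * ln (real n) = 2 * (2 * real d) ^ d * ln (real n) / real n ^ k * (real n ^ k / (2 * real d) ^ d)"
    using n k by (simp add: field_simps)
  also have "\<dots> \<le> p k * real ((n - ?s) choose k)"
    using dense binomial_ge_pow_div[of k d ?s n] k n S p01 by (intro mult_mono) auto
  finally have "2 * ln (real n) \<le> p k * real ((n - ?s) choose k)" .
  then have "real ?s * (2 * ln (real n)) \<le> real ?s * (p k * real ((n - ?s) choose k))"
    by (intro mult_left_mono) auto
  also have "\<dots> = p k * (real ?s * real ((n - ?s) choose k))"
    by (simp add: algebra_simps)
  also have "\<dots> \<le> p k * real ?c"
    using card_crossing_kedges_ge[OF S(1), of k] k p01
    by (intro mult_left_mono) (simp_all flip: of_nat_mult)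
  finally have exponent: "2 * real ?s * ln (real n) \<le> p k * real ?c" by simp
  have "(\<Prod>e\<in>crossing_kedges n k S. 1 - edge_prob p e) = (\<Prod>e\<in>crossing_kedges n k S. 1 - p k)"
    by (intro prod.cong refl) (auto simp: crossing_kedges_def edge_prob_kedges)
  also have "\<dots> = (1 - p k) ^ ?c" by simp
  also have "\<dots> \<le> exp (- p k) ^ ?c"
    using p01 by (intro power_mono) (auto simp: exp_minus_ge)
  also have "\<dots> = exp (- (p k * real ?c))"
    by (simp add: exp_of_nat_mult[symmetric] mult.commute)
  also have "\<dots> \<le> exp (- (2 * real ?s * ln (real n)))"
    using exponent by simp
  also have "\<dots> = exp (ln (1 / real n ^ 2)) ^ ?s"
    using n by (simp add: exp_of_nat_mult[symmetric] ln_div ln_realpow)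
  also have "\<dots> = (1 / real n ^ 2) ^ ?s"
    using n by simp
  finally show ?thesis .
qed

lemma sum_pow_card:
  fixes x :: "'a :: comm_semiring_1"
  assumes "finite A"
  shows "(\<Sum>S\<in>Pow A. x ^ card S) = (1 + x) ^ card A"
  using prod_add[OF assms, of "\<lambda>_. x" "\<lambda>_. 1"] by (simp add: add.commute)

lemma dense_prob_disconnected_le:
  assumes p01: "\<forall>k. 0 \<le> p k \<and> p k \<le> 1" and k: "k \<in> {1..d}" and n: "2 \<le> n" "2 * d \<le> n"
    and dense: "2 * (2 * real d) ^ d * ln (real n) / real n ^ k \<le> p k"
  shows "1 - prob_connected n d p \<le> exp (1 / real n) - 1"
proof -
  define cuts where "cuts = {S. S \<subseteq> {..<n} \<and> S \<noteq> {} \<and> 2 * card S \<le> n}"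
  have finite_cuts: "finite cuts" unfolding cuts_def by (rule finite_subset[of _ "Pow {..<n}"]) auto
  have crossing_edges: "crossing_kedges n k S \<subseteq> all_edges n d" for S
    using k unfolding crossing_kedges_def all_edges_def by auto
  have union_bound: "(if hconnected n E then 0 else 1) \<le>
      (\<Sum>S\<in>cuts. if E \<inter> crossing_kedges n k S = {} then 1 else 0 :: real)"
    if "E \<subseteq> all_edges n d" for E
  proof (cases "hconnected n E")
    case False
    with that obtain S where "S \<in> cuts" "E \<inter> crossing_kedges n k S = {}"
      by (rule not_hconnected_imp_cut) (auto simp: cuts_def crossing_kedges_def)
    then show ?thesis
      using member_le_sum[of S cuts "\<lambda>S. if E \<inter> crossing_kedges n k S = {} then 1 else 0 :: real"]
        finite_cuts False by auto
  qed (simp add: sum_nonneg)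
  have "1 - prob_connected n d p \<le>
      expect n d p (\<lambda>E. \<Sum>S\<in>cuts. if E \<inter> crossing_kedges n k S = {} then 1 else 0)"
    unfolding prob_disconnected_eq_expect by (rule expect_mono[OF p01 union_bound])
  also have "\<dots> = (\<Sum>S\<in>cuts. \<Prod>e\<in>crossing_kedges n k S. 1 - edge_prob p e)"
    by (simp add: expect_sum expect_avoid[OF crossing_edges])
  also have "\<dots> \<le> (\<Sum>S\<in>cuts. (1 / real n ^ 2) ^ card S)"
    using dense_cut_avoid_prob_le[OF p01 k n dense] by (intro sum_mono) (auto simp: cuts_def)
  also have "\<dots> \<le> (\<Sum>S\<in>Pow {..<n} - {{}}. (1 / real n ^ 2) ^ card S)"
    by (intro sum_mono2) (auto simp: cuts_def)
  also have "\<dots> = (1 + 1 / real n ^ 2) ^ n - 1"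
    by (simp add: sum_diff1 sum_pow_card)
  also have "\<dots> \<le> exp (1 / real n ^ 2) ^ n - 1"
    by (intro diff_right_mono power_mono) (auto simp: add.commute)
  also have "\<dots> = exp (1 / real n) - 1"
    using n by (simp add: exp_of_nat_mult[symmetric] power2_eq_square)
  finally show ?thesis .
qed

theorem lemma3p2:
  fixes d :: nat
  assumes "d \<ge> 2"
  shows "\<exists>cm cp :: real. cm > 0 \<and> cp > 0 \<and>
    (\<forall>p :: nat \<Rightarrow> nat \<Rightarrow> real.
       (\<forall>n k. 0 \<le> p n k \<and> p n k \<le> 1) \<longrightarrow>
       ((\<forall>\<^sub>F n in sequentially. \<forall>k\<in>{1..d}. p n k \<le> cm * ln (real n) / real n ^ k)
          \<longrightarrow> ((\<lambda>n. prob_connected n d (p n)) \<longlonglongrightarrow> 0)) \<and>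
       ((\<forall>\<^sub>F n in sequentially. \<exists>k\<in>{1..d}. p n k \<ge> cp * ln (real n) / real n ^ k)
          \<longrightarrow> ((\<lambda>n. prob_connected n d (p n)) \<longlonglongrightarrow> 1)))"
proof (intro exI conjI allI impI)
  show "0 < 1 / (4 * real d)" "0 < 2 * (2 * real d) ^ d" using assms by simp_all
next
  fix p :: "nat \<Rightarrow> nat \<Rightarrow> real"
  assume p01: "\<forall>n k. 0 \<le> p n k \<and> p n k \<le> 1"
    and sparse: "\<forall>\<^sub>F n in sequentially. \<forall>k\<in>{1..d}. p n k \<le> 1 / (4 * real d) * ln (real n) / real n ^ k"
  have upper: "\<forall>\<^sub>F n in sequentially.
      prob_connected n d (p n) \<le> 1 / sqrt (real n) + ln (real n) / (2 * real n)"
    using sparse eventually_ge_at_top[of 2]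
  proof eventually_elim
    case (elim n)
    show ?case
      by (rule sparse_prob_connected_le[OF _ _ elim(2) elim(1)]) (use p01 assms in auto)
  qed
  have lower: "\<forall>\<^sub>F n in sequentially. 0 \<le> prob_connected n d (p n)"
    using prob_connected_bounds(1) p01 by simp
  have "(\<lambda>n. 1 / sqrt (real n) + ln (real n) / (2 * real n)) \<longlonglongrightarrow> 0"
    by real_asymp
  then show "(\<lambda>n. prob_connected n d (p n)) \<longlonglongrightarrow> 0"
    by (rule tendsto_sandwich[OF lower upper tendsto_const])
next
  fix p :: "nat \<Rightarrow> nat \<Rightarrow> real"
  assume p01: "\<forall>n k. 0 \<le> p n k \<and> p n k \<le> 1"
    and dense: "\<forall>\<^sub>F n in sequentially. \<exists>k\<in>{1..d}. 2 * (2 * real d) ^ d * ln (real n) / real n ^ k \<le> p n k"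
  have upper: "\<forall>\<^sub>F n in sequentially. 1 - prob_connected n d (p n) \<le> exp (1 / real n) - 1"
    using dense eventually_ge_at_top[of "2 * d"] eventually_ge_at_top[of 2]
  proof eventually_elim
    case (elim n)
    then obtain k where "k \<in> {1..d}" "2 * (2 * real d) ^ d * ln (real n) / real n ^ k \<le> p n k"
      by blast
    then show ?case
      using dense_prob_disconnected_le[of "p n" k d n] elim p01 by blast
  qed
  have lower: "\<forall>\<^sub>F n in sequentially. 0 \<le> 1 - prob_connected n d (p n)"
    using prob_connected_bounds(2) p01 by simp
  have "(\<lambda>n. exp (1 / real n) - 1) \<longlonglongrightarrow> 0"
    by real_asymp
  then have "(\<lambda>n. 1 - prob_connected n d (p n)) \<longlonglongrightarrow> 0"
    by (rule tendsto_sandwich[OF lower upper tendsto_const])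
  then have "(\<lambda>n. 1 - (1 - prob_connected n d (p n))) \<longlonglongrightarrow> 1 - 0"
    by (intro tendsto_diff tendsto_const)
  then show "(\<lambda>n. prob_connected n d (p n)) \<longlonglongrightarrow> 1"
    by simp
qed

end
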